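(* Let $u$ and $v$ be Laurent polynomials with symmetry such that $vv^\star$ divides $uu^\star$. Then there exists a Laurent polynomial $d$ with symmetry such that $$d\,d^\star=\frac{uu^\star}{vv^\star}.$$ Furthermore, for every Laurent polynomial $d$ with symmetry satisfying this identity, there exists $k\in\mathbb Z$ such that $\mathrm{S}d(z)=z^{2k}\,\mathrm{S}u(z)/\mathrm{S}v(z)$.
   Context: Laurent polynomial $u(z)=\sum_ku(k)z^k$ with finitely many nonzero complex coefficients; $u^\star(z):=\sum_k\overline{u(k)}z^{-k}$. $u$ has symmetry of type $\epsilon z^c$ ($\epsilon\in\{\pm1\},c\in\mathbb Z$) if $u(z)=\epsilon z^cu(z^{-1})$; for nonzero $u$, $\mathrm{S}u(z):=u(z)/u(z^{-1})$; the zero polynomial has symmetry of every type. *)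

theory Defs
  imports Complex_Main
begin

text \<open>A Laurent polynomial u(z) = sum_k u(k) z^k is represented by its coefficient
  function int => complex, required to have finite support.\<close>

definition laurent :: "(int \<Rightarrow> complex) \<Rightarrow> bool" where
  "laurent u \<longleftrightarrow> finite {k. u k \<noteq> 0}"

definition lmult :: "(int \<Rightarrow> complex) \<Rightarrow> (int \<Rightarrow> complex) \<Rightarrow> (int \<Rightarrow> complex)" where
  "lmult u v = (\<lambda>n. \<Sum>k\<in>{k. u k \<noteq> 0}. u k * v (n - k))"

definition lstar :: "(int \<Rightarrow> complex) \<Rightarrow> (int \<Rightarrow> complex)" where
  "lstar u = (\<lambda>k. cnj (u (- k)))"

definition ldvd :: "(int \<Rightarrow> complex) \<Rightarrow> (int \<Rightarrow> complex) \<Rightarrow> bool" where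
  "ldvd a b \<longleftrightarrow> (\<exists>q. laurent q \<and> b = lmult a q)"

text \<open>Symmetry of type eps z^c: u(z) = eps z^c u(z^-1), i.e. u(k) = eps u(c - k).\<close>
definition has_symmetry_type :: "(int \<Rightarrow> complex) \<Rightarrow> int \<Rightarrow> int \<Rightarrow> bool" where
  "has_symmetry_type u \<epsilon> c \<longleftrightarrow> (\<forall>k. u k = of_int \<epsilon> * u (c - k))"

definition has_symmetry :: "(int \<Rightarrow> complex) \<Rightarrow> bool" where
  "has_symmetry u \<longleftrightarrow> (\<exists>\<epsilon> c. \<epsilon> \<in> {1, -1} \<and> has_symmetry_type u \<epsilon> c)"

definition leval :: "(int \<Rightarrow> complex) \<Rightarrow> complex \<Rightarrow> complex" where
  "leval u z = (\<Sum>k\<in>{k. u k \<noteq> 0}. u k * z powi k)"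

definition lS :: "(int \<Rightarrow> complex) \<Rightarrow> complex \<Rightarrow> complex" where
  "lS u z = leval u z / leval u (inverse z)"

end

theory Submission
  imports Defs "HOL-Computational_Algebra.Fundamental_Theorem_Algebra"
begin

text \<open>Write a nonzero Laurent polynomial as z^m p(z) with p(0) \<noteq> 0. It has symmetry
  exactly when p is self-reciprocal up to a sign e, and then S(z^m p) = e z^(2m + deg p).
  With pstar p = z^(deg p) conj(p(1/conj z)) one has u u^star = z^(-deg p) p pstar p, so for
  u = z^m p and v = z^n q both claims reduce to polynomials.
  Existence: induct on deg q. A root a of q gives a symmetric factor f of q (X - a if
  a = 1 or a = -1, else (X - a)(X - 1/a)) and, since a is a root of p pstar p, a symmetric
  factor g of p with f pstar f = g pstar g; cancel f from q and g from p.
  Uniqueness of S: from d d^star v v^star = u u^star with d = z^k D, comparing degrees gives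
  deg p = deg D + deg q, and comparing constant coefficients, which are e |p(0)|^2 for
  p pstar p, gives e_u = e_d e_v.\<close>

definition pstar :: "complex poly \<Rightarrow> complex poly" where
  "pstar p = reflect_poly (map_poly cnj p)"

definition sym_poly :: "complex \<Rightarrow> complex poly \<Rightarrow> bool" where
  "sym_poly e p \<longleftrightarrow> p \<noteq> 0 \<and> e \<in> {1, -1} \<and> reflect_poly p = smult e p"

lemma degree_map_poly_cnj [simp]: "degree (map_poly cnj p) = degree p"
  by (rule degree_map_poly) simp

lemma coeff_map_poly_cnj [simp]: "coeff (map_poly cnj p) n = cnj (coeff p n)"
  by (simp add: coeff_map_poly)

lemma map_poly_cnj_mult: "map_poly cnj (p * q) = map_poly cnj p * map_poly cnj q"
  by (rule poly_eq_poly_eq_iff[THEN iffD1]) (auto simp: fun_eq_iff)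

lemma pstar_mult: "pstar (p * q) = pstar p * pstar q"
  by (simp add: pstar_def map_poly_cnj_mult reflect_poly_mult)

lemma pstar_smult: "pstar (smult c p) = smult (cnj c) (pstar p)"
proof -
  have "map_poly cnj (smult c p) = smult (cnj c) (map_poly cnj p)"
    by (rule poly_eqI) simp
  then show ?thesis
    by (simp add: pstar_def reflect_poly_smult)
qed

lemma pstar_eq_0_iff [simp]: "pstar p = 0 \<longleftrightarrow> p = 0"
  by (simp add: pstar_def map_poly_eq_0_iff)

lemma coeff_0_pstar: "coeff (pstar p) 0 = cnj (lead_coeff p)"
  by (simp add: pstar_def)

lemma degree_pstar: "coeff p 0 \<noteq> 0 \<Longrightarrow> degree (pstar p) = degree p"
  by (simp add: pstar_def)

lemma poly_pstar: "z \<noteq> 0 \<Longrightarrow> poly (pstar p) z = z ^ degree p * cnj (poly p (cnj (inverse z)))"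
  by (simp add: pstar_def poly_reflect_poly_nz)

lemma sym_poly_sign_square: "sym_poly e p \<Longrightarrow> e * e = 1"
  by (auto simp: sym_poly_def)

lemma lead_coeff_sym_poly: "sym_poly e p \<Longrightarrow> lead_coeff p = e * coeff p 0"
  by (metis coeff_0_reflect_poly coeff_smult sym_poly_def)

lemma coeff_0_sym_poly: "sym_poly e p \<Longrightarrow> coeff p 0 \<noteq> 0"
  by (metis lead_coeff_sym_poly leading_coeff_0_iff mult_zero_right sym_poly_def)

lemma poly_sym_poly:
  assumes "sym_poly e p" "z \<noteq> 0"
  shows "poly p z = e * z ^ degree p * poly p (inverse z)"
proof -
  have "e * poly p z = z ^ degree p * poly p (inverse z)"
    using assms poly_reflect_poly_nz[of z p] by (simp add: sym_poly_def)
  then show ?thesis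
    using sym_poly_sign_square[OF assms(1)] by (metis mult.assoc mult_1)
qed

lemma sym_poly_root_inverse:
  assumes "sym_poly e p" "poly p a = 0"
  shows "a \<noteq> 0" "poly p (inverse a) = 0"
proof -
  show "a \<noteq> 0"
    using assms coeff_0_sym_poly poly_0_coeff_0 by metis
  then show "poly p (inverse a) = 0"
    using poly_sym_poly[OF assms(1), of "inverse a"] assms(2) by simp
qed

lemma sym_poly_smult: "sym_poly e p \<Longrightarrow> r \<noteq> 0 \<Longrightarrow> sym_poly e (smult r p)"
  by (simp add: sym_poly_def reflect_poly_smult mult.commute)

lemma sym_poly_mult_cancel:
  assumes "sym_poly e (f * g)" "sym_poly e' f"
  shows "sym_poly (e * e') g"
proof -
  have "f \<noteq> 0" "g \<noteq> 0"
    using assms by (auto simp: sym_poly_def)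
  have "smult e' f * reflect_poly g = smult e f * g"
    using assms by (simp add: sym_poly_def reflect_poly_mult)
  then have "smult e' (smult e' f * reflect_poly g) = f * smult (e * e') g"
    by (simp add: mult_ac)
  also have "smult e' (smult e' f * reflect_poly g) = f * reflect_poly g"
    using sym_poly_sign_square[OF assms(2)] by simp
  finally have "reflect_poly g = smult (e * e') g"
    using \<open>f \<noteq> 0\<close> by (metis mult_left_cancel)
  with assms \<open>g \<noteq> 0\<close> show ?thesis
    by (auto simp: sym_poly_def)
qed

lemma coeff_0_mult_pstar:
  assumes "sym_poly e p"
  shows "coeff (p * pstar p) 0 = e * of_real ((cmod (coeff p 0))\<^sup>2)"
proof -
  have "cnj e = e"
    using assms by (auto simp: sym_poly_def)
  then have "coeff (p * pstar p) 0 = e * (coeff p 0 * cnj (coeff p 0))"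
    using lead_coeff_sym_poly[OF assms] by (simp add: coeff_mult_0 coeff_0_pstar mult_ac)
  then show ?thesis
    by (simp only: complex_norm_square)
qed

lemma coeff_0_mult_pstar_neq_0:
  assumes "sym_poly e p"
  shows "coeff (p * pstar p) 0 \<noteq> 0"
proof -
  have "e \<noteq> 0"
    using assms by (auto simp: sym_poly_def)
  then show ?thesis
    using coeff_0_mult_pstar[OF assms] coeff_0_sym_poly[OF assms] by simp
qed

lemma degree_mult_pstar: "coeff p 0 \<noteq> 0 \<Longrightarrow> degree (p * pstar p) = 2 * degree p"
  using degree_mult_eq[of p "pstar p"] by (cases "p = 0") (auto simp: degree_pstar)

definition recip_quadratic :: "complex \<Rightarrow> complex poly" where
  "recip_quadratic a = [:-a, 1:] * [:-inverse a, 1:]"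

lemma recip_quadratic_eq: "a \<noteq> 0 \<Longrightarrow> recip_quadratic a = [:1, -(a + inverse a), 1:]"
  by (simp add: recip_quadratic_def algebra_simps)

lemma reflect_poly_palindromic_quadratic:
  "reflect_poly [:1, b, 1:] = [:1, b :: 'a :: zero_neq_one, 1:]"
  by (rule poly_eqI) (auto simp: coeff_reflect_poly coeff_pCons split: nat.split)

lemma sym_poly_recip_quadratic: "a \<noteq> 0 \<Longrightarrow> sym_poly 1 (recip_quadratic a)"
  by (simp add: sym_poly_def recip_quadratic_eq reflect_poly_palindromic_quadratic)

lemma degree_recip_quadratic: "a \<noteq> 0 \<Longrightarrow> degree (recip_quadratic a) = 2"
  by (simp add: recip_quadratic_eq)

lemma pstar_recip_quadratic:
  assumes "a \<noteq> 0"
  shows "pstar (recip_quadratic a) = recip_quadratic (cnj (inverse a))"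
proof -
  have "map_poly cnj (recip_quadratic a) = [:1, -(cnj a + cnj (inverse a)), 1:]"
    using assms by (intro poly_eqI) (simp add: recip_quadratic_eq coeff_pCons split: nat.split)
  then show ?thesis
    using assms
    by (simp add: pstar_def reflect_poly_palindromic_quadratic recip_quadratic_eq add.commute)
qed

lemma recip_quadratic_dvd:
  assumes "sym_poly e p" "poly p a = 0" "a * a \<noteq> 1"
  shows "recip_quadratic a dvd p"
proof -
  obtain p1 where p1: "p = [:-a, 1:] * p1"
    using assms(2) poly_eq_0_iff_dvd by blast
  have "a \<noteq> 0" "poly p (inverse a) = 0"
    using sym_poly_root_inverse[OF assms(1,2)] by auto
  moreover have "inverse a \<noteq> a"
    using assms(3) by (metis \<open>a \<noteq> 0\<close> left_inverse)
  ultimately have "poly p1 (inverse a) = 0"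
    using p1 by simp
  then obtain p2 where "p1 = [:-inverse a, 1:] * p2"
    using poly_eq_0_iff_dvd by blast
  then have "p = recip_quadratic a * p2"
    using p1 by (simp only: recip_quadratic_def mult.assoc)
  then show ?thesis ..
qed

lemma sym_poly_linear: "a * a = 1 \<Longrightarrow> sym_poly (-a) [:-a, 1:]"
  by (auto simp: sym_poly_def reflect_poly_pCons' monom_Suc monom_0 square_eq_1_iff)

text \<open>If p has the root b = 1 / cnj a instead of a, the quadratic factors with roots a, 1/a
  and b, 1/b are exchanged by pstar and so have the same norm.\<close>

lemma sym_poly_common_factor:
  assumes q: "sym_poly e q" and p: "sym_poly e' p" and "degree q > 0"
    and dvd: "q * pstar q dvd p * pstar p"
  obtains f g c c' where "f dvd q" "g dvd p" "sym_poly c f" "sym_poly c' g" "degree f > 0"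
    "f * pstar f = g * pstar g"
proof -
  obtain a where a: "poly q a = 0"
    using fundamental_theorem_of_algebra \<open>degree q > 0\<close> constant_degree by (metis not_gr0)
  have "a \<noteq> 0"
    using sym_poly_root_inverse[OF q a] by simp
  have "poly (p * pstar p) a = 0"
    using a dvd by (metis dvdE mult_eq_0_iff poly_mult)
  then have pa: "poly p a = 0 \<or> poly p (cnj (inverse a)) = 0"
    using \<open>a \<noteq> 0\<close> by (simp add: poly_pstar)
  show ?thesis
  proof (cases "a * a = 1")
    case True
    then have "cnj (inverse a) = a"
      by (auto simp: square_eq_1_iff)
    then have "[:-a, 1:] dvd p"
      using pa poly_eq_0_iff_dvd by auto
    moreover have "[:-a, 1:] dvd q"
      using a poly_eq_0_iff_dvd by blast
    ultimately show ?thesis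
      using that sym_poly_linear[OF True] by simp
  next
    case False
    have fq: "recip_quadratic a dvd q"
      using recip_quadratic_dvd[OF q a False] .
    show ?thesis
    proof (cases "poly p a = 0")
      case True
      show ?thesis
        using \<open>a \<noteq> 0\<close>
        by (intro that[OF fq recip_quadratic_dvd[OF p True False] sym_poly_recip_quadratic
              sym_poly_recip_quadratic]) (simp_all add: degree_recip_quadratic)
    next
      case False
      define b where "b = cnj (inverse a)"
      have "b \<noteq> 0" and pb: "poly p b = 0"
        using pa False \<open>a \<noteq> 0\<close> by (auto simp: b_def)
      moreover have bb: "b * b \<noteq> 1"
        using \<open>a * a \<noteq> 1\<close> unfolding b_def
        by (metis complex_cnj_cnj complex_cnj_mult complex_cnj_one inverse_1 inverse_mult_distrib
            inverse_inverse_eq)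
      moreover have pstar_ab: "pstar (recip_quadratic a) = recip_quadratic b"
        "pstar (recip_quadratic b) = recip_quadratic a"
        using pstar_recip_quadratic \<open>a \<noteq> 0\<close> \<open>b \<noteq> 0\<close> by (simp_all add: b_def)
      ultimately show ?thesis
        using \<open>a \<noteq> 0\<close>
        by (intro that[OF fq recip_quadratic_dvd[OF p pb bb] sym_poly_recip_quadratic
              sym_poly_recip_quadratic])
          (simp_all add: degree_recip_quadratic pstar_ab mult.commute)
    qed
  qed
qed

lemma sym_poly_norm_const_factor:
  assumes "sym_poly e p" "c \<noteq> 0"
  shows "\<exists>D. sym_poly e D \<and> D * pstar D * ([:c:] * pstar [:c:]) = p * pstar p"
proof -
  define r where "r = complex_of_real (1 / cmod c)"
  have "r * r * (c * cnj c) = 1"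
    using assms(2)
    by (simp add: r_def flip: complex_norm_square) (simp add: field_simps power2_eq_square)
  moreover have "pstar [:c:] = [:cnj c:]" "cnj r = r"
    by (simp_all add: pstar_def r_def map_poly_pCons)
  ultimately have "smult r p * pstar (smult r p) * ([:c:] * pstar [:c:]) = p * pstar p"
    by (simp add: pstar_smult pstar_mult algebra_simps)
  moreover have "sym_poly e (smult r p)"
    using assms by (intro sym_poly_smult) (auto simp: r_def)
  ultimately show ?thesis
    by blast
qed

lemma sym_poly_norm_quotient:
  assumes "sym_poly e q" "sym_poly e' p" "q * pstar q dvd p * pstar p"
  shows "\<exists>D c. sym_poly c D \<and> D * pstar D * (q * pstar q) = p * pstar p"
  using assms
proof (induction "degree q" arbitrary: e e' p q rule: less_induct)
  case less
  show ?case
  proof (cases "degree q = 0")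
    case True
    then have "q = [:coeff q 0:]" "coeff q 0 \<noteq> 0"
      using degree_0_id[of q] coeff_0_sym_poly[OF less.prems(1)] by simp_all
    then show ?thesis
      using sym_poly_norm_const_factor[OF less.prems(2)] by metis
  next
    case False
    then obtain f g c c' where fg: "f dvd q" "g dvd p" "sym_poly c f" "sym_poly c' g" "degree f > 0"
      "f * pstar f = g * pstar g"
      using sym_poly_common_factor less.prems by (metis neq0_conv)
    obtain q' p' where q': "q = f * q'" and p': "p = g * p'"
      using fg(1,2) unfolding dvd_def by blast
    have "sym_poly (e * c) q'" "sym_poly (e' * c') p'"
      using sym_poly_mult_cancel fg(3,4) q' p' less.prems(1,2) by blast+
    moreover have "f \<noteq> 0" "q' \<noteq> 0"
      using fg(3) \<open>sym_poly (e * c) q'\<close> by (auto simp: sym_poly_def)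
    then have "degree q' < degree q"
      using q' fg(5) by (simp add: degree_mult_eq)
    moreover have norm_q: "q * pstar q = (f * pstar f) * (q' * pstar q')"
      and norm_p: "p * pstar p = (f * pstar f) * (p' * pstar p')"
      using q' p' fg(6) by (simp_all add: pstar_mult algebra_simps)
    moreover have "f * pstar f \<noteq> 0"
      using \<open>f \<noteq> 0\<close> by simp
    ultimately obtain D d where "sym_poly d D" "D * pstar D * (q' * pstar q') = p' * pstar p'"
      using less.hyps less.prems(3) by (metis dvd_mult_cancel_left)
    then show ?thesis
      using norm_q norm_p by (metis mult.left_commute)
  qed
qed

lemma sym_poly_norm_quotient_degree:
  assumes "sym_poly a D" "sym_poly b q" "sym_poly c p" "D * pstar D * (q * pstar q) = p * pstar p"
  shows "degree p = degree D + degree q"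
proof -
  have "D * pstar D \<noteq> 0" "q * pstar q \<noteq> 0"
    using assms(1,2) by (auto simp: sym_poly_def)
  then have "degree (p * pstar p) = degree (D * pstar D) + degree (q * pstar q)"
    using assms(4) degree_mult_eq by metis
  then show ?thesis
    using assms(1-3) by (simp add: degree_mult_pstar coeff_0_sym_poly)
qed

lemma sym_poly_norm_quotient_sign:
  assumes "sym_poly a D" "sym_poly b q" "sym_poly c p" "D * pstar D * (q * pstar q) = p * pstar p"
  shows "c = a * b"
proof -
  define x where "x = (cmod (coeff p 0))\<^sup>2"
  define y where "y = (cmod (coeff D 0))\<^sup>2 * (cmod (coeff q 0))\<^sup>2"
  have "x > 0" "y > 0"
    using assms(1-3) coeff_0_sym_poly by (auto simp: x_def y_def)
  have "coeff (p * pstar p) 0 = coeff (D * pstar D) 0 * coeff (q * pstar q) 0"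
    by (simp only: assms(4)[symmetric] coeff_mult_0[of "D * pstar D"])
  then have "c * of_real x =
      a * of_real ((cmod (coeff D 0))\<^sup>2) * (b * of_real ((cmod (coeff q 0))\<^sup>2))"
    unfolding coeff_0_mult_pstar[OF assms(1)] coeff_0_mult_pstar[OF assms(2)]
      coeff_0_mult_pstar[OF assms(3)] x_def .
  then have "c * of_real x = a * b * of_real y"
    by (simp add: y_def mult_ac)
  with \<open>x > 0\<close> \<open>y > 0\<close> assms(1-3) show ?thesis
    by (auto simp: sym_poly_def)
qed

text \<open>lpoly m p is the Laurent polynomial z^m p(z).\<close>

definition lpoly :: "int \<Rightarrow> complex poly \<Rightarrow> int \<Rightarrow> complex" where
  "lpoly m p = (\<lambda>k. if m \<le> k then coeff p (nat (k - m)) else 0)"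

lemma lpoly_support: "{k. lpoly m p k \<noteq> 0} \<subseteq> {m..m + int (degree p)}"
  by (auto simp: lpoly_def split: if_splits dest!: le_degree)

lemma laurent_lpoly: "laurent (lpoly m p)"
  unfolding laurent_def by (rule finite_subset[OF lpoly_support]) simp

lemma sum_lpoly_support:
  "(\<Sum>k\<in>{k. lpoly m p k \<noteq> 0}. lpoly m p k * f k) =
    (\<Sum>i\<le>degree p. coeff p i * f (m + int i))"
proof -
  have "{m..m + int (degree p)} = (\<lambda>i. m + int i) ` {..degree p}"
    by (auto simp: image_iff intro!: bexI[of _ "nat (_ - m)"])
  moreover have "(\<Sum>k\<in>{k. lpoly m p k \<noteq> 0}. lpoly m p k * f k) =
      (\<Sum>k\<in>{m..m + int (degree p)}. lpoly m p k * f k)"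
    by (rule sum.mono_neutral_left) (use lpoly_support in auto)
  ultimately show ?thesis
    by (simp add: sum.reindex inj_on_def lpoly_def)
qed

lemma lmult_lpoly: "lmult (lpoly m p) (lpoly n q) = lpoly (m + n) (p * q)"
proof
  fix j
  have "lmult (lpoly m p) (lpoly n q) j =
      (\<Sum>i\<le>degree p. coeff p i * lpoly n q (j - (m + int i)))"
    unfolding lmult_def by (rule sum_lpoly_support)
  also have "\<dots> = lpoly (m + n) (p * q) j"
  proof (cases "m + n \<le> j")
    case False
    then show ?thesis
      by (auto simp: lpoly_def intro!: sum.neutral)
  next
    case True
    define N where "N = nat (j - m - n)"
    define g where "g i = coeff p i * (if i \<le> N then coeff q (N - i) else 0)" for i
    have "n \<le> j - (m + int i) \<longleftrightarrow> i \<le> N" for i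
      using True unfolding N_def by arith
    moreover have "nat (j - (m + int i) - n) = N - i" if "i \<le> N" for i
      using True that unfolding N_def by arith
    ultimately have "(\<Sum>i\<le>degree p. coeff p i * lpoly n q (j - (m + int i))) =
        (\<Sum>i\<le>degree p. g i)"
      by (intro sum.cong) (auto simp: lpoly_def g_def)
    also have "\<dots> = (\<Sum>i\<le>degree p + N. g i)"
      by (rule sum.mono_neutral_left) (auto simp: g_def coeff_eq_0)
    also have "\<dots> = (\<Sum>i\<le>N. g i)"
      by (rule sum.mono_neutral_right) (auto simp: g_def)
    also have "\<dots> = lpoly (m + n) (p * q) j"
      using True by (simp add: coeff_mult g_def lpoly_def N_def diff_diff_eq)
    finally show ?thesis .
  qed
  finally show "lmult (lpoly m p) (lpoly n q) j = lpoly (m + n) (p * q) j" .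
qed

lemma lmult_zero_left [simp]: "lmult (\<lambda>_. 0) w = (\<lambda>_. 0)"
  by (simp add: lmult_def)

lemma lmult_zero_right [simp]: "lmult w (\<lambda>_. 0) = (\<lambda>_. 0)"
  by (simp add: lmult_def)

lemma lpoly_reflect: "lpoly m p (c - k) = lpoly (c - m - int (degree p)) (reflect_poly p) k"
proof (cases "c - m - int (degree p) \<le> k \<and> k \<le> c - m")
  case True
  then have "degree p - nat (k - (c - m - int (degree p))) = nat (c - k - m)"
    by linarith
  with True show ?thesis
    by (auto simp: lpoly_def coeff_reflect_poly)
next
  case False
  then show ?thesis
    by (auto simp: lpoly_def coeff_reflect_poly coeff_eq_0)
qed

lemma cnj_lpoly: "cnj (lpoly m p k) = lpoly m (map_poly cnj p) k"
  by (simp add: lpoly_def)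

lemma lstar_lpoly: "lstar (lpoly m p) = lpoly (- m - int (degree p)) (pstar p)"
  using lpoly_reflect[of m "map_poly cnj p" 0]
  by (simp add: fun_eq_iff lstar_def cnj_lpoly pstar_def)

lemma lmult_lstar_lpoly:
  "lmult (lpoly m p) (lstar (lpoly m p)) = lpoly (- int (degree p)) (p * pstar p)"
  by (simp add: lstar_lpoly lmult_lpoly)

lemma lpoly_smult: "lpoly m (smult c p) k = c * lpoly m p k"
  by (simp add: lpoly_def)

lemma leval_lpoly: "z \<noteq> 0 \<Longrightarrow> leval (lpoly m p) z = z powi m * poly p z"
  unfolding leval_def sum_lpoly_support
  by (simp add: poly_altdef sum_distrib_left power_int_add mult_ac)

lemma lpoly_eq_0_iff: "lpoly m p = (\<lambda>_. 0) \<longleftrightarrow> p = 0"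
proof
  assume "lpoly m p = (\<lambda>_. 0)"
  then have "coeff p i = 0" for i
    using fun_cong[of _ _ "m + int i"] by (fastforce simp: lpoly_def)
  then show "p = 0"
    by (simp add: poly_eqI)
qed (simp add: lpoly_def fun_eq_iff)

lemma lpoly_eq_iff:
  assumes "coeff p 0 \<noteq> 0" "coeff q 0 \<noteq> 0"
  shows "lpoly m p = lpoly n q \<longleftrightarrow> m = n \<and> p = q"
proof
  assume eq: "lpoly m p = lpoly n q"
  have "\<not> m < n" "\<not> n < m"
    using fun_cong[OF eq, of m] fun_cong[OF eq, of n] assms by (auto simp: lpoly_def)
  then have "m = n"
    by simp
  moreover have "coeff p i = coeff q i" for i
    using fun_cong[OF eq, of "m + int i"] \<open>m = n\<close> by (simp add: lpoly_def)
  ultimately show "m = n \<and> p = q"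
    by (simp add: poly_eqI)
qed simp

lemma laurent_lpoly_repr:
  assumes "laurent u" "u \<noteq> (\<lambda>_. 0)"
  obtains m p where "u = lpoly m p" "coeff p 0 \<noteq> 0"
proof -
  define S where "S = {k. u k \<noteq> 0}"
  have "finite S" "S \<noteq> {}"
    using assms by (auto simp: laurent_def S_def)
  define m where "m = Min S"
  have "m \<in> S" and m_le: "k \<in> S \<Longrightarrow> m \<le> k" for k
    using \<open>finite S\<close> \<open>S \<noteq> {}\<close> by (simp_all add: m_def)
  have le_Max: "k \<in> S \<Longrightarrow> k \<le> Max S" for k
    using \<open>finite S\<close> by simp
  define p where "p = Abs_poly (\<lambda>i. u (m + int i))"
  have "\<forall>i > nat (Max S - m). u (m + int i) = 0"
    using le_Max unfolding S_def by force
  then have coeff_p: "coeff p i = u (m + int i)" for i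
    unfolding p_def by (subst coeff_Abs_poly) auto
  have "u = lpoly m p"
  proof
    fix k
    show "u k = lpoly m p k"
      using m_le[of k] by (cases "m \<le> k") (auto simp: lpoly_def coeff_p S_def)
  qed
  moreover have "coeff p 0 \<noteq> 0"
    using \<open>m \<in> S\<close> by (simp add: coeff_p S_def)
  ultimately show ?thesis
    using that by blast
qed

lemma has_symmetry_type_lpoly_iff:
  assumes "coeff p 0 \<noteq> 0" "\<epsilon> \<in> {1, -1}"
  shows "has_symmetry_type (lpoly m p) \<epsilon> c \<longleftrightarrow>
    c = 2 * m + int (degree p) \<and> reflect_poly p = smult (of_int \<epsilon>) p"
proof -
  have "of_int \<epsilon> * of_int \<epsilon> = (1 :: complex)"
    using assms(2) by auto
  then have smult_flip: "p = smult (of_int \<epsilon>) r \<longleftrightarrow> r = smult (of_int \<epsilon>) p" for r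
    by auto
  have "has_symmetry_type (lpoly m p) \<epsilon> c \<longleftrightarrow>
      lpoly m p = lpoly (c - m - int (degree p)) (smult (of_int \<epsilon>) (reflect_poly p))"
    by (simp add: has_symmetry_type_def fun_eq_iff lpoly_reflect lpoly_smult)
  also have "\<dots> \<longleftrightarrow> m = c - m - int (degree p) \<and> p = smult (of_int \<epsilon>) (reflect_poly p)"
    using assms by (intro lpoly_eq_iff) auto
  finally show ?thesis
    by (auto simp: smult_flip)
qed

lemma has_symmetry_lpoly_iff:
  assumes "coeff p 0 \<noteq> 0"
  shows "has_symmetry (lpoly m p) \<longleftrightarrow> (\<exists>e. sym_poly e p)"
proof
  assume "has_symmetry (lpoly m p)"
  then obtain \<epsilon> c where "\<epsilon> \<in> {1, -1}" "has_symmetry_type (lpoly m p) \<epsilon> c"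
    by (auto simp: has_symmetry_def)
  with assms have "sym_poly (of_int \<epsilon>) p"
    by (auto simp: sym_poly_def has_symmetry_type_lpoly_iff)
  then show "\<exists>e. sym_poly e p" ..
next
  assume "\<exists>e. sym_poly e p"
  then obtain e where e: "sym_poly e p" ..
  then have "e = of_int 1 \<or> e = of_int (-1)"
    by (simp add: sym_poly_def)
  then obtain \<epsilon> :: int where "\<epsilon> \<in> {1, -1}" "e = of_int \<epsilon>"
    by blast
  with assms e show "has_symmetry (lpoly m p)"
    unfolding has_symmetry_def sym_poly_def by (auto simp: has_symmetry_type_lpoly_iff)
qed

lemma lS_lpoly:
  assumes "sym_poly e p" "z \<noteq> 0" "leval (lpoly m p) (inverse z) \<noteq> 0"
  shows "lS (lpoly m p) z = e * z powi (2 * m + int (degree p))"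
proof -
  define w where "w = poly p (inverse z)"
  have num: "leval (lpoly m p) z = e * z powi (m + int (degree p)) * w"
    using assms(2) poly_sym_poly[OF assms(1,2)]
    by (simp add: leval_lpoly w_def power_int_add mult_ac)
  have den: "leval (lpoly m p) (inverse z) = inverse (z powi m) * w"
    using assms(2) by (simp add: leval_lpoly w_def power_int_inverse)
  then have "w \<noteq> 0"
    using assms(3) by simp
  then have "lS (lpoly m p) z = e * z powi (m + int (degree p)) * z powi m"
    using assms(2) by (simp add: lS_def num den divide_inverse)
  also have "\<dots> = e * z powi (2 * m + int (degree p))"
    using assms(2) by (metis mult.assoc add.commute left_add_twice power_int_add)
  finally show ?thesis .
qed

lemma ldvd_lpoly_imp_dvd:
  assumes "ldvd (lpoly m p) (lpoly n q)" "coeff p 0 \<noteq> 0" "coeff q 0 \<noteq> 0"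
  shows "p dvd q"
proof -
  obtain w where "laurent w" and w: "lpoly n q = lmult (lpoly m p) w"
    using assms(1) by (auto simp: ldvd_def)
  moreover have "w \<noteq> (\<lambda>_. 0)"
    using w assms(3) by (auto simp: lpoly_eq_0_iff)
  ultimately obtain k r where r: "w = lpoly k r" "coeff r 0 \<noteq> 0"
    using laurent_lpoly_repr by blast
  then have "lpoly n q = lpoly (m + k) (p * r)"
    using w by (simp add: lmult_lpoly)
  then have "q = p * r"
    using assms(2,3) r(2) by (simp add: lpoly_eq_iff coeff_mult_0)
  then show ?thesis
    by simp
qed

lemma sym_laurent_lpoly_repr:
  assumes "laurent u" "has_symmetry u" "u \<noteq> (\<lambda>_. 0)"
  obtains m p e where "u = lpoly m p" "sym_poly e p"
proof -
  obtain m p where "u = lpoly m p" "coeff p 0 \<noteq> 0"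
    using laurent_lpoly_repr assms(1,3) by blast
  with assms(2) show ?thesis
    using that has_symmetry_lpoly_iff by blast
qed

lemma lmult_norm_eq_lpoly_norm_imp_nonzero:
  assumes "lmult (lmult d (lstar d)) w = lmult (lpoly m p) (lstar (lpoly m p))" "sym_poly c p"
  shows "d \<noteq> (\<lambda>_. 0)"
proof
  assume "d = (\<lambda>_. 0)"
  with assms(1) have "lpoly (- int (degree p)) (p * pstar p) = (\<lambda>_. 0)"
    by (simp add: lmult_lstar_lpoly)
  with coeff_0_mult_pstar_neq_0[OF assms(2)] show False
    by (simp add: lpoly_eq_0_iff)
qed

lemma lmult_norms_lpoly_iff:
  assumes "sym_poly a D" "sym_poly b q" "sym_poly c p"
  shows "lmult (lmult (lpoly k D) (lstar (lpoly k D))) (lmult (lpoly n q) (lstar (lpoly n q))) =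
      lmult (lpoly m p) (lstar (lpoly m p)) \<longleftrightarrow>
    D * pstar D * (q * pstar q) = p * pstar p"
proof -
  have "coeff (D * pstar D * (q * pstar q)) 0 \<noteq> 0"
    using coeff_0_mult_pstar_neq_0 assms(1,2) by (simp only: coeff_mult_0) simp
  then show ?thesis
    using coeff_0_mult_pstar_neq_0[OF assms(3)] sym_poly_norm_quotient_degree[OF assms]
    by (auto simp: lmult_lstar_lpoly lmult_lpoly lpoly_eq_iff)
qed

text \<open>No hypothesis on leval (lpoly n q) z is needed: by lS_lpoly, lS of a symmetric Laurent
  polynomial is a signed power of z, so the division below is never by zero.\<close>

lemma lS_norm_quotient:
  assumes "sym_poly a D" "sym_poly b q" "sym_poly c p" "D * pstar D * (q * pstar q) = p * pstar p"
    and "z \<noteq> 0" "leval (lpoly k D) (inverse z) \<noteq> 0" "leval (lpoly m p) (inverse z) \<noteq> 0"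
      "leval (lpoly n q) (inverse z) \<noteq> 0"
  shows "lS (lpoly k D) z = z powi (2 * (k - m + n)) * lS (lpoly m p) z / lS (lpoly n q) z"
proof -
  have "b \<noteq> 0"
    using assms(2) by (auto simp: sym_poly_def)
  have "z powi (2 * (k - m + n)) * z powi (2 * m + int (degree p)) =
      z powi (2 * k + int (degree D)) * z powi (2 * n + int (degree q))"
    using assms(5) sym_poly_norm_quotient_degree[OF assms(1-4)]
    by (simp add: power_int_add[symmetric] algebra_simps)
  then show ?thesis
    using assms \<open>b \<noteq> 0\<close> sym_poly_norm_quotient_sign[OF assms(1-4)]
    by (simp add: lS_lpoly field_simps)
qed

theorem lemma3p17:
  fixes u v :: "int \<Rightarrow> complex"
  assumes "laurent u" and "laurent v"
    and "has_symmetry u" and "has_symmetry v"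
    and "u \<noteq> (\<lambda>_. 0)" and "v \<noteq> (\<lambda>_. 0)"
    and "ldvd (lmult v (lstar v)) (lmult u (lstar u))"
  shows "(\<exists>d. laurent d \<and> has_symmetry d \<and>
            lmult (lmult d (lstar d)) (lmult v (lstar v)) = lmult u (lstar u))
       \<and> (\<forall>d. laurent d \<and> has_symmetry d \<and>
            lmult (lmult d (lstar d)) (lmult v (lstar v)) = lmult u (lstar u) \<longrightarrow>
            (\<exists>k::int. \<forall>z::complex. z \<noteq> 0 \<and> leval d (inverse z) \<noteq> 0 \<and>
                 leval u (inverse z) \<noteq> 0 \<and> leval v (inverse z) \<noteq> 0 \<and> leval v z \<noteq> 0 \<longrightarrow>
                 lS d z = z powi (2 * k) * lS u z / lS v z))"
proof -
  obtain m p c where u: "u = lpoly m p" and p: "sym_poly c p"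
    using sym_laurent_lpoly_repr assms(1,3,5) by metis
  obtain n q b where v: "v = lpoly n q" and q: "sym_poly b q"
    using sym_laurent_lpoly_repr assms(2,4,6) by metis
  have "q * pstar q dvd p * pstar p"
    using assms(7) coeff_0_mult_pstar_neq_0[OF p] coeff_0_mult_pstar_neq_0[OF q]
    by (simp add: u v lmult_lstar_lpoly ldvd_lpoly_imp_dvd)
  then obtain D a where "sym_poly a D" "D * pstar D * (q * pstar q) = p * pstar p"
    using sym_poly_norm_quotient[OF q p] by blast
  then have "laurent (lpoly 0 D) \<and> has_symmetry (lpoly 0 D) \<and>
      lmult (lmult (lpoly 0 D) (lstar (lpoly 0 D))) (lmult v (lstar v)) = lmult u (lstar u)"
    using p q
    by (auto simp: u v laurent_lpoly has_symmetry_lpoly_iff coeff_0_sym_poly lmult_norms_lpoly_iff)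
  moreover have "\<exists>k. \<forall>z. z \<noteq> 0 \<and> leval d (inverse z) \<noteq> 0 \<and> leval u (inverse z) \<noteq> 0 \<and>
      leval v (inverse z) \<noteq> 0 \<and> leval v z \<noteq> 0 \<longrightarrow> lS d z = z powi (2 * k) * lS u z / lS v z"
    if d: "laurent d" "has_symmetry d"
      "lmult (lmult d (lstar d)) (lmult v (lstar v)) = lmult u (lstar u)" for d
  proof -
    have "d \<noteq> (\<lambda>_. 0)"
      using d(3) p unfolding u by (rule lmult_norm_eq_lpoly_norm_imp_nonzero)
    then obtain k D a where "d = lpoly k D" "sym_poly a D"
      using sym_laurent_lpoly_repr d(1,2) by metis
    then show ?thesis
      using d(3) p q lS_norm_quotient
      by (intro exI[of _ "k - m + n"]) (auto simp: u v lmult_norms_lpoly_iff)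
  qed
  ultimately show ?thesis
    by blast
qed

end
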